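(* Let $\alpha>-1$, $d\in\widetilde{D}$ (with the convention $d_{-1}=0$), $p=(L_n^{(\alpha+1)})_{n\in\mathbb{N}_0}$, $q=(L_n^{(\alpha)})_{n\in\mathbb{N}_0}$, and let $T=E_{p,d}$ be regarded as an operator in $H(q)$ with domain $\mathcal{P}_c$. For $g=\sum_kg_kq_k\in H(q)$: (i) $g\in D(T^* )$ iff $\sum_{k=0}^\infty\left|g_k\bar d_k+(\bar d_k-\bar d_{k-1})\sum_{t=0}^{k-1}g_t\right|^2<\infty$; (ii) for $g\in D(T^* )$, $T^*g=\sum_{k=0}^\infty\left(g_k\bar d_k+(\bar d_k-\bar d_{k-1})\sum_{t=0}^{k-1}g_t\right)q_k$; (iii) for $s\in\mathbb{N}_0$, $q_s\in D(T^* )$ iff $(\bar d_k-\bar d_{k-1})_{k\in\mathbb{N}_0}\in\ell_2$; (iv) if $(\bar d_k-\bar d_{k-1})_{k\in\mathbb{N}_0}\in\ell_2$, then $T$ is closable and (a) $g\in D(\overline{T})$ iff $\sum_{s=0}^\infty\left|g_sd_s+\sum_{k=s+1}^\infty(d_k-d_{k-1})g_k\right|^2<\infty$, (b) for $g\in D(\overline{T})$, $\overline{T}g=\sum_{s=0}^\infty\left(g_sd_s+\sum_{k=s+1}^\infty(d_k-d_{k-1})g_k\right)q_s$.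
   Context: $\mathcal{P}_c$ is the space of polynomials in one real variable with complex coefficients. For $\beta>-1$, $L_n^{(\beta)}(x)=\sum_{k=0}^n\frac{(-1)^k}{k!}\binom{n+\beta}{n-k}x^k$ is the generalized Laguerre polynomial. For a sequence $Q=(Q_n)$ of polynomials with $\deg Q_n=n$, $H(Q)$ is the completion of $\mathcal{P}_c$ with respect to the inner product making $(Q_n)$ orthonormal (so here the unnormalized $L_n^{(\alpha)}$ are orthonormal); $g\in H(Q)$ is written $g=\sum_kg_kQ_k$, $(g_k)\in\ell_2$. $\widetilde{D}$ is the set of non-constant sequences of non-zero complex numbers. For a polynomial sequence $p$ and $d\in\widetilde{D}$, $E_{p,d}$ is the linear map on $\mathcal{P}_c$ with $E_{p,d}(p_n)=d_np_n$. $T^*$ denotes the adjoint and $\overline{T}$ the closure. *)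

theory Defs
  imports "HOL-Analysis.Analysis" "HOL-Computational_Algebra.Polynomial"
begin

definition laguerre :: "real \<Rightarrow> nat \<Rightarrow> complex poly" where
  "laguerre \<beta> n = (\<Sum>k\<le>n. monom (complex_of_real
       ((-1)^k / fact k * ((real n + \<beta>) gchoose (n - k)))) k)"

definition fin_supp :: "(nat \<Rightarrow> complex) set" where
  "fin_supp = {c. finite {k. c k \<noteq> 0}}"

definition series :: "(nat \<Rightarrow> complex poly) \<Rightarrow> (nat \<Rightarrow> complex) \<Rightarrow> complex poly" where
  "series Q c = (\<Sum>k\<in>{k. c k \<noteq> 0}. smult (c k) (Q k))"

(* coefficients of a polynomial f in the basis Q (unique since deg Q_n = n) *)
definition coords :: "(nat \<Rightarrow> complex poly) \<Rightarrow> complex poly \<Rightarrow> (nat \<Rightarrow> complex)" where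
  "coords Q f = (THE c. c \<in> fin_supp \<and> f = series Q c)"

definition E_op :: "(nat \<Rightarrow> complex poly) \<Rightarrow> (nat \<Rightarrow> complex) \<Rightarrow> complex poly \<Rightarrow> complex poly" where
  "E_op p d f = series p (\<lambda>n. d n * coords p f n)"

definition Dtilde :: "(nat \<Rightarrow> complex) set" where
  "Dtilde = {d. (\<forall>n. d n \<noteq> 0) \<and> (\<exists>m n. d m \<noteq> d n)}"

(* H(Q) is identified with l2 via g = \<Sum> g_k Q_k *)
definition l2 :: "(nat \<Rightarrow> complex) set" where
  "l2 = {g. summable (\<lambda>k. (cmod (g k))\<^sup>2)}"

definition l2_inner :: "(nat \<Rightarrow> complex) \<Rightarrow> (nat \<Rightarrow> complex) \<Rightarrow> complex" where
  "l2_inner f g = (\<Sum>k. f k * cnj (g k))"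

definition l2_norm :: "(nat \<Rightarrow> complex) \<Rightarrow> real" where
  "l2_norm f = sqrt (\<Sum>k. (cmod (f k))\<^sup>2)"

(* a (possibly unbounded) operator in l2 is given by a domain Dom and a map T *)
definition adj_dom :: "(nat \<Rightarrow> complex) set \<Rightarrow> ((nat \<Rightarrow> complex) \<Rightarrow> (nat \<Rightarrow> complex))
    \<Rightarrow> (nat \<Rightarrow> complex) set" where
  "adj_dom Dom T = {g \<in> l2. \<exists>h\<in>l2. \<forall>f\<in>Dom. l2_inner (T f) g = l2_inner f h}"

definition adj :: "(nat \<Rightarrow> complex) set \<Rightarrow> ((nat \<Rightarrow> complex) \<Rightarrow> (nat \<Rightarrow> complex))
    \<Rightarrow> (nat \<Rightarrow> complex) \<Rightarrow> (nat \<Rightarrow> complex)" where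
  "adj Dom T g = (THE h. h \<in> l2 \<and> (\<forall>f\<in>Dom. l2_inner (T f) g = l2_inner f h))"

definition graph_closure :: "(nat \<Rightarrow> complex) set \<Rightarrow> ((nat \<Rightarrow> complex) \<Rightarrow> (nat \<Rightarrow> complex))
    \<Rightarrow> ((nat \<Rightarrow> complex) \<times> (nat \<Rightarrow> complex)) set" where
  "graph_closure Dom T = {(g, h). g \<in> l2 \<and> h \<in> l2 \<and>
     (\<exists>f. (\<forall>n. f n \<in> Dom) \<and> (\<lambda>n. l2_norm (f n - g)) \<longlonglongrightarrow> 0
          \<and> (\<lambda>n. l2_norm (T (f n) - h)) \<longlonglongrightarrow> 0)}"

definition closable :: "(nat \<Rightarrow> complex) set \<Rightarrow> ((nat \<Rightarrow> complex) \<Rightarrow> (nat \<Rightarrow> complex)) \<Rightarrow> bool" where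
  "closable Dom T \<longleftrightarrow> (\<forall>g h h'. (g, h) \<in> graph_closure Dom T \<and> (g, h') \<in> graph_closure Dom T \<longrightarrow> h = h')"

definition closure_dom :: "(nat \<Rightarrow> complex) set \<Rightarrow> ((nat \<Rightarrow> complex) \<Rightarrow> (nat \<Rightarrow> complex))
    \<Rightarrow> (nat \<Rightarrow> complex) set" where
  "closure_dom Dom T = {g. \<exists>h. (g, h) \<in> graph_closure Dom T}"

definition closure_op :: "(nat \<Rightarrow> complex) set \<Rightarrow> ((nat \<Rightarrow> complex) \<Rightarrow> (nat \<Rightarrow> complex))
    \<Rightarrow> (nat \<Rightarrow> complex) \<Rightarrow> (nat \<Rightarrow> complex)" where
  "closure_op Dom T g = (THE h. (g, h) \<in> graph_closure Dom T)"

(* T = E_{p,d} with p = (L_n^(alpha+1)), q = (L_n^(alpha)), as an operator in H(q) with domain P_c,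
   written in q-coordinates: domain = finitely supported sequences *)
definition T_op :: "real \<Rightarrow> (nat \<Rightarrow> complex) \<Rightarrow> (nat \<Rightarrow> complex) \<Rightarrow> (nat \<Rightarrow> complex)" where
  "T_op \<alpha> d c = coords (laguerre \<alpha>) (E_op (laguerre (\<alpha> + 1)) d (series (laguerre \<alpha>) c))"

definition dprev :: "(nat \<Rightarrow> complex) \<Rightarrow> nat \<Rightarrow> complex" where
  "dprev d k = (if k = 0 then 0 else d (k - 1))"

end

theory Submission
  imports Defs
begin

text \<open>Because \<open>L_n^(\<alpha>+1) = \<Sum>_{k\<le>n} L_k^(\<alpha>)\<close>, a finitely supported \<open>c\<close> written in the basis
  \<open>q\<close> has \<open>p\<close>-coordinates \<open>c_n - c_{n+1}\<close>, so \<open>(T c)_k = \<Sum>_{n\<ge>k} d_n (c_n - c_{n+1})\<close>.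
  Summation by parts turns \<open>\<langle>T c, g\<rangle>\<close> into \<open>\<langle>c, h\<rangle>\<close> for an explicit sequence \<open>h\<close>,
  and testing against unit vectors shows that \<open>h\<close> is the only candidate for \<open>T* g\<close>.
  For the closure, the \<open>s\<close>-th coordinate of \<open>T c\<close> is \<open>\<langle>c, T* e_s\<rangle>\<close>, which depends
  continuously on \<open>c\<close> as soon as \<open>T* e_s \<in> \<ell>\<^sub>2\<close>, i.e. as soon as \<open>(d_k - d_{k-1}) \<in> \<ell>\<^sub>2\<close>;
  this determines every limit point of the graph. Conversely \<open>g\<close> is approximated by the
  truncations \<open>s \<mapsto> g_s - g_N\<close> (\<open>s < N\<close>), whose images are the corresponding truncations of
  the limit; their distance \<open>N |g_N|^2 + \<Sum>_{s\<ge>N} |g_s|^2\<close> tends to zero along a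
  subsequence because \<open>\<Sum> |g_N|^2 < \<infinity>\<close> while the harmonic series diverges.\<close>

section \<open>Laguerre polynomials\<close>

lemma coeff_laguerre:
  "coeff (laguerre \<beta> n) i =
     (if i \<le> n then complex_of_real ((-1)^i / fact i * ((real n + \<beta>) gchoose (n - i))) else 0)"
  unfolding laguerre_def by (simp add: coeff_sum coeff_monom)

lemma laguerre_nonzero: "laguerre \<beta> n \<noteq> 0"
proof
  assume "laguerre \<beta> n = 0"
  then have "coeff (laguerre \<beta> n) n = 0" by simp
  then show False by (simp add: coeff_laguerre)
qed

lemma degree_laguerre: "degree (laguerre \<beta> n) = n"
proof (rule order_antisym)
  show "degree (laguerre \<beta> n) \<le> n" by (rule degree_le) (simp add: coeff_laguerre)
  show "n \<le> degree (laguerre \<beta> n)" by (rule le_degree) (simp add: coeff_laguerre)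
qed

lemma laguerre_plus_one_0: "laguerre (\<beta> + 1) 0 = laguerre \<beta> 0"
  by (rule poly_eqI) (simp add: coeff_laguerre)

lemma laguerre_plus_one_Suc:
  "laguerre (\<beta> + 1) (Suc n) = laguerre (\<beta> + 1) n + laguerre \<beta> (Suc n)"
proof (rule poly_eqI)
  fix i
  show "coeff (laguerre (\<beta> + 1) (Suc n)) i = coeff (laguerre (\<beta> + 1) n + laguerre \<beta> (Suc n)) i"
  proof (cases "i \<le> n")
    case True
    then have "Suc n - i = Suc (n - i)" by simp
    moreover have "(real (Suc n) + (\<beta> + 1)) gchoose Suc (n - i)
        = ((real n + (\<beta> + 1)) gchoose (n - i)) + ((real (Suc n) + \<beta>) gchoose Suc (n - i))"
      using gbinomial_Suc_Suc[of "real (Suc n) + \<beta>" "n - i"] by (simp add: algebra_simps)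
    ultimately show ?thesis
      using True by (simp add: coeff_laguerre algebra_simps add_divide_distrib)
  next
    case False
    then show ?thesis by (cases "i = Suc n") (simp_all add: coeff_laguerre)
  qed
qed

lemma laguerre_plus_one_eq_sum: "laguerre (\<beta> + 1) n = (\<Sum>k\<le>n. laguerre \<beta> k)"
  by (induction n) (simp_all add: laguerre_plus_one_0 laguerre_plus_one_Suc)

section \<open>Coordinates with respect to a basis of degrees \<open>0, 1, 2, \<dots>\<close>\<close>

lemma fin_suppI: "(\<And>k. k \<ge> N \<Longrightarrow> c k = 0) \<Longrightarrow> c \<in> fin_supp"
proof -
  assume "\<And>k. k \<ge> N \<Longrightarrow> c k = 0"
  then have "{k. c k \<noteq> 0} \<subseteq> {..<N}" by (force simp: not_le[symmetric])
  then show ?thesis unfolding fin_supp_def by (auto intro: finite_subset)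
qed

lemma fin_suppE:
  assumes "c \<in> fin_supp"
  obtains N where "\<And>k. k \<ge> N \<Longrightarrow> c k = 0"
proof -
  from assms obtain N where "\<forall>k\<in>{k. c k \<noteq> 0}. k < N"
    unfolding fin_supp_def using finite_nat_bounded by blast
  then show ?thesis using that by (metis mem_Collect_eq not_le)
qed

lemma series_eq_sum_lessThan:
  assumes "\<And>k. k \<ge> N \<Longrightarrow> c k = 0"
  shows "series Q c = (\<Sum>k<N. smult (c k) (Q k))"
  unfolding series_def
  by (rule sum.mono_neutral_left) (use assms in \<open>auto simp: not_le[symmetric]\<close>)

lemma sum_smult_degree_eq_0D:
  fixes Q :: "nat \<Rightarrow> 'a::idom poly"
  assumes deg: "\<And>k. degree (Q k) = k" and nz: "\<And>k. Q k \<noteq> 0"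
    and sum: "(\<Sum>k<N. smult (x k) (Q k)) = 0" and "k < N"
  shows "x k = 0"
  using sum \<open>k < N\<close>
proof (induction N)
  case (Suc N)
  have "coeff (\<Sum>k<N. smult (x k) (Q k)) N = 0"
    by (simp add: coeff_sum coeff_eq_0 deg)
  then have "x N * lead_coeff (Q N) = 0"
    using arg_cong[OF Suc.prems(1), of "\<lambda>p. coeff p N"] by (simp add: deg)
  then have "x N = 0" using nz[of N] by simp
  then show ?case using Suc by (auto simp: less_Suc_eq)
qed simp

lemma coords_series:
  fixes Q :: "nat \<Rightarrow> complex poly"
  assumes deg: "\<And>k. degree (Q k) = k" and nz: "\<And>k. Q k \<noteq> 0" and c: "c \<in> fin_supp"
  shows "coords Q (series Q c) = c"
  unfolding coords_def
proof (rule the_equality)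
  fix c' assume c': "c' \<in> fin_supp \<and> series Q c = series Q c'"
  obtain N where N: "\<And>k. k \<ge> N \<Longrightarrow> c k = 0" using fin_suppE[OF c] by blast
  obtain M where M: "\<And>k. k \<ge> M \<Longrightarrow> c' k = 0" using c' fin_suppE by blast
  have "(\<Sum>k<max N M. smult (c' k - c k) (Q k)) = series Q c' - series Q c"
    by (simp add: series_eq_sum_lessThan[of "max N M"] N M smult_diff_left sum_subtractf)
  then have "(\<Sum>k<max N M. smult (c' k - c k) (Q k)) = 0" using c' by simp
  then have "c' k - c k = 0" if "k < max N M" for k
    using sum_smult_degree_eq_0D[OF deg nz, of "\<lambda>k. c' k - c k"] that by blast
  then show "c' = c" using N M by (intro ext) (metis max.bounded_iff eq_iff_diff_eq_0 not_less)
qed (use c in simp)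

section \<open>The operator in \<open>q\<close>-coordinates\<close>

lemma smult_sum_right: "smult a (sum f A) = (\<Sum>x\<in>A. smult a (f x))"
  by (induction A rule: infinite_finite_induct) (simp_all add: smult_add_right)

lemma sum_smult_partial_sum_basis:
  fixes P Q :: "nat \<Rightarrow> 'a::comm_ring poly"
  assumes PQ: "\<And>n. P n = (\<Sum>k\<le>n. Q k)"
  shows "(\<Sum>n<N. smult (x n) (P n)) = (\<Sum>k<N. smult (\<Sum>n\<in>{k..<N}. x n) (Q k))"
proof (induction N)
  case (Suc N)
  have "(\<Sum>k<Suc N. smult (\<Sum>n\<in>{k..<Suc N}. x n) (Q k))
      = (\<Sum>k<Suc N. smult (\<Sum>n\<in>{k..<N}. x n) (Q k) + smult (x N) (Q k))"
    by (rule sum.cong) (auto simp: smult_add_left)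
  also have "\<dots> = (\<Sum>k<N. smult (\<Sum>n\<in>{k..<N}. x n) (Q k)) + smult (x N) (P N)"
    by (simp add: PQ sum.distrib smult_sum_right smult_add_right lessThan_Suc_atMost[symmetric])
  finally show ?case using Suc by simp
qed simp

lemma series_partial_sum_basis:
  fixes P Q :: "nat \<Rightarrow> complex poly"
  assumes PQ: "\<And>n. P n = (\<Sum>k\<le>n. Q k)" and c: "c \<in> fin_supp"
  shows "series Q c = series P (\<lambda>n. c n - c (Suc n))"
proof -
  obtain N where N: "\<And>k. k \<ge> N \<Longrightarrow> c k = 0" using fin_suppE[OF c] by blast
  have "series P (\<lambda>n. c n - c (Suc n)) = (\<Sum>n<N. smult (c n - c (Suc n)) (P n))"
    by (rule series_eq_sum_lessThan) (simp add: N)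
  also have "\<dots> = (\<Sum>k<N. smult (\<Sum>n\<in>{k..<N}. c n - c (Suc n)) (Q k))"
    by (rule sum_smult_partial_sum_basis[OF PQ])
  also have "\<dots> = (\<Sum>k<N. smult (c k) (Q k))"
    using sum_Suc_diff'[of _ N "\<lambda>n. - c n"] by (intro sum.cong) (simp_all add: N)
  also have "\<dots> = series Q c" by (rule series_eq_sum_lessThan[symmetric]) (rule N)
  finally show ?thesis ..
qed

lemma T_op_eq:
  assumes c: "\<And>k. k \<ge> N \<Longrightarrow> c k = 0"
  shows "T_op \<alpha> d c = (\<lambda>k. \<Sum>n\<in>{k..<N}. d n * (c n - c (Suc n)))"
proof -
  let ?P = "laguerre (\<alpha> + 1)" and ?Q = "laguerre \<alpha>" and ?Tc = "\<lambda>k. \<Sum>n\<in>{k..<N}. d n * (c n - c (Suc n))"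
  have PQ: "?P n = (\<Sum>k\<le>n. ?Q k)" for n by (rule laguerre_plus_one_eq_sum)
  have "c \<in> fin_supp" by (rule fin_suppI) (rule c)
  moreover have "(\<lambda>n. c n - c (Suc n)) \<in> fin_supp" by (rule fin_suppI[of N]) (simp add: c)
  ultimately have "coords ?P (series ?Q c) = (\<lambda>n. c n - c (Suc n))"
    by (simp add: series_partial_sum_basis[OF PQ] coords_series degree_laguerre laguerre_nonzero)
  then have "E_op ?P d (series ?Q c) = series ?P (\<lambda>n. d n * (c n - c (Suc n)))"
    by (simp add: E_op_def)
  also have "\<dots> = (\<Sum>n<N. smult (d n * (c n - c (Suc n))) (?P n))"
    by (rule series_eq_sum_lessThan) (simp add: c)
  also have "\<dots> = (\<Sum>k<N. smult (?Tc k) (?Q k))"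
    by (rule sum_smult_partial_sum_basis[OF PQ])
  also have "\<dots> = series ?Q ?Tc"
    by (rule series_eq_sum_lessThan[symmetric]) simp
  moreover have "?Tc \<in> fin_supp" by (rule fin_suppI[of N]) simp
  ultimately show ?thesis
    unfolding T_op_def by (simp add: coords_series degree_laguerre laguerre_nonzero)
qed

section \<open>Square-summable sequences\<close>

lemma l2_cnj_iff: "(\<lambda>k. cnj (x k)) \<in> l2 \<longleftrightarrow> x \<in> l2"
  by (simp add: l2_def)

lemma fin_supp_subset_l2: "fin_supp \<subseteq> l2"
proof
  fix x assume "x \<in> fin_supp"
  then obtain N where "\<And>k. k \<ge> N \<Longrightarrow> x k = 0" using fin_suppE by blast
  then have "summable (\<lambda>k. (cmod (x k))\<^sup>2)"
    by (intro summable_finite[of "{..<N}"]) (auto simp: not_less)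
  then show "x \<in> l2" by (simp add: l2_def)
qed

lemma cmod_diff_squared_le: "(cmod (a - b))\<^sup>2 \<le> 2 * (cmod a)\<^sup>2 + 2 * (cmod b)\<^sup>2"
proof -
  have "(cmod (a - b))\<^sup>2 \<le> (cmod a + cmod b)\<^sup>2"
    by (simp add: power_mono norm_triangle_ineq4)
  also have "\<dots> \<le> 2 * (cmod a)\<^sup>2 + 2 * (cmod b)\<^sup>2"
    using zero_le_power2[of "cmod a - cmod b"] unfolding power2_diff power2_sum by linarith
  finally show ?thesis .
qed

lemma l2_diff:
  assumes "x \<in> l2" "y \<in> l2"
  shows "x - y \<in> l2"
proof -
  have "summable (\<lambda>k. 2 * (cmod (x k))\<^sup>2 + 2 * (cmod (y k))\<^sup>2)"
    using assms unfolding l2_def by (auto intro!: summable_add summable_mult)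
  then have "summable (\<lambda>k. (cmod (x k - y k))\<^sup>2)"
    by (rule summable_comparison_test[rotated]) (simp add: cmod_diff_squared_le)
  then show ?thesis by (simp add: l2_def)
qed

lemma l2_summable_norm_mult:
  assumes "x \<in> l2" "y \<in> l2"
  shows "summable (\<lambda>k. cmod (x k) * cmod (y k))"
proof (rule summable_comparison_test[OF _ summable_add])
  show "summable (\<lambda>k. (cmod (x k))\<^sup>2)" "summable (\<lambda>k. (cmod (y k))\<^sup>2)"
    using assms by (simp_all add: l2_def)
  have "cmod (x k) * cmod (y k) \<le> (cmod (x k))\<^sup>2 + (cmod (y k))\<^sup>2" for k
    using zero_le_power2[of "cmod (x k) - cmod (y k)"] mult_nonneg_nonneg[OF norm_ge_zero norm_ge_zero, of "x k" "y k"]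
    unfolding power2_diff by linarith
  then show "\<exists>N. \<forall>k\<ge>N. norm (cmod (x k) * cmod (y k)) \<le> (cmod (x k))\<^sup>2 + (cmod (y k))\<^sup>2"
    by (simp add: abs_mult)
qed

lemma l2_summable_mult: "x \<in> l2 \<Longrightarrow> y \<in> l2 \<Longrightarrow> summable (\<lambda>k. x k * y k)"
  by (rule summable_norm_cancel) (simp add: norm_mult l2_summable_norm_mult)

lemma norm_le_l2_norm:
  assumes "x \<in> l2"
  shows "cmod (x s) \<le> l2_norm x"
proof -
  have "(cmod (x s))\<^sup>2 = (\<Sum>k\<in>{s}. (cmod (x k))\<^sup>2)" by simp
  also have "\<dots> \<le> (\<Sum>k. (cmod (x k))\<^sup>2)"
    using assms unfolding l2_def by (intro sum_le_suminf) simp_all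
  finally show ?thesis unfolding l2_norm_def by (simp add: real_le_rsqrt)
qed

lemma suminf_norm_mult_le_l2_norm:
  assumes "x \<in> l2" "y \<in> l2"
  shows "(\<Sum>k. cmod (x k) * cmod (y k)) \<le> l2_norm x * l2_norm y"
proof (rule suminf_le_const[OF l2_summable_norm_mult[OF assms]])
  fix n
  have sx: "summable (\<lambda>k. (cmod (x k))\<^sup>2)" and sy: "summable (\<lambda>k. (cmod (y k))\<^sup>2)"
    using assms by (simp_all add: l2_def)
  have "(\<Sum>k<n. cmod (x k) * cmod (y k))
      \<le> L2_set (\<lambda>k. cmod (x k)) {..<n} * L2_set (\<lambda>k. cmod (y k)) {..<n}"
    using L2_set_mult_ineq[of "\<lambda>k. cmod (x k)" "\<lambda>k. cmod (y k)" "{..<n}"] by simp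
  also have "\<dots> \<le> l2_norm x * l2_norm y"
    unfolding L2_set_def l2_norm_def
  proof (rule mult_mono)
    show "sqrt (\<Sum>k<n. (cmod (x k))\<^sup>2) \<le> sqrt (\<Sum>k. (cmod (x k))\<^sup>2)"
      by (intro real_sqrt_le_mono sum_le_suminf[OF sx]) simp_all
    show "sqrt (\<Sum>k<n. (cmod (y k))\<^sup>2) \<le> sqrt (\<Sum>k. (cmod (y k))\<^sup>2)"
      by (intro real_sqrt_le_mono sum_le_suminf[OF sy]) simp_all
  qed (simp_all add: suminf_nonneg[OF sx] sum_nonneg)
  finally show "(\<Sum>k<n. cmod (x k) * cmod (y k)) \<le> l2_norm x * l2_norm y" .
qed

lemma norm_l2_inner_le: "x \<in> l2 \<Longrightarrow> h \<in> l2 \<Longrightarrow> cmod (l2_inner x h) \<le> l2_norm x * l2_norm h"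
proof -
  assume x: "x \<in> l2" and h: "h \<in> l2"
  then have h': "(\<lambda>k. cnj (h k)) \<in> l2" by (simp add: l2_cnj_iff)
  have "cmod (l2_inner x h) \<le> (\<Sum>k. cmod (x k) * cmod (cnj (h k)))"
    unfolding l2_inner_def norm_mult[symmetric]
    by (rule summable_norm) (use l2_summable_norm_mult[OF x h] in \<open>simp add: norm_mult\<close>)
  also have "\<dots> \<le> l2_norm x * l2_norm (\<lambda>k. cnj (h k))"
    by (rule suminf_norm_mult_le_l2_norm[OF x h'])
  finally show ?thesis by (simp add: l2_norm_def)
qed

lemma l2_inner_diff_left:
  assumes "x \<in> l2" "y \<in> l2" "h \<in> l2"
  shows "l2_inner x h - l2_inner y h = l2_inner (x - y) h"
proof -
  have h': "(\<lambda>k. cnj (h k)) \<in> l2" using assms by (simp add: l2_cnj_iff)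
  show ?thesis
    unfolding l2_inner_def
    by (simp add: suminf_diff[OF l2_summable_mult[OF assms(1) h'] l2_summable_mult[OF assms(2) h']]
        left_diff_distrib)
qed

lemma l2_inner_unit_left: "l2_inner (\<lambda>k. if k = s then 1 else 0) h = cnj (h s)"
  unfolding l2_inner_def by (subst suminf_finite[of "{s}"]) auto

lemma l2_inner_unit_right: "l2_inner x (\<lambda>k. if k = s then 1 else 0) = x s"
  unfolding l2_inner_def by (subst suminf_finite[of "{s}"]) auto

lemma unit_in_fin_supp: "(\<lambda>k. if k = s then 1 else 0) \<in> fin_supp"
  by (rule fin_suppI[of "Suc s"]) auto

section \<open>The adjoint\<close>

definition adj_seq :: "(nat \<Rightarrow> complex) \<Rightarrow> (nat \<Rightarrow> complex) \<Rightarrow> nat \<Rightarrow> complex" where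
  "adj_seq d g k = g k * cnj (d k) + cnj (d k - dprev d k) * (\<Sum>t<k. g t)"

lemma sum_tails_mult_swap:
  fixes y x :: "nat \<Rightarrow> 'a::comm_semiring_0"
  shows "(\<Sum>k<N. (\<Sum>n\<in>{k..<N}. y n) * x k) = (\<Sum>n<N. y n * (\<Sum>k\<le>n. x k))"
proof (induction N)
  case (Suc N)
  have "(\<Sum>k<Suc N. (\<Sum>n\<in>{k..<Suc N}. y n) * x k)
      = (\<Sum>k<Suc N. (\<Sum>n\<in>{k..<N}. y n) * x k + y N * x k)"
    by (rule sum.cong) (auto simp: distrib_right)
  also have "\<dots> = (\<Sum>k<N. (\<Sum>n\<in>{k..<N}. y n) * x k) + y N * (\<Sum>k\<le>N. x k)"
    by (simp add: sum.distrib sum_distrib_left distrib_left lessThan_Suc_atMost[symmetric])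
  finally show ?case using Suc by simp
qed simp

lemma sum_diff_mult_by_parts:
  fixes c y y' :: "nat \<Rightarrow> 'a::comm_ring"
  assumes "y' 0 = 0" and "\<And>n. y' (Suc n) = y n"
  shows "(\<Sum>n<N. (c n - c (Suc n)) * y n) = (\<Sum>n<N. c n * (y n - y' n)) - c N * y' N"
  by (induction N) (simp_all add: assms algebra_simps)

lemma l2_inner_T_op:
  assumes "c \<in> fin_supp"
  shows "l2_inner (T_op \<alpha> d c) g = l2_inner c (adj_seq d g)"
proof -
  obtain N where c: "\<And>k. k \<ge> N \<Longrightarrow> c k = 0" using assms fin_suppE by blast
  define y where "y n = d n * cnj (\<Sum>t<Suc n. g t)" for n
  define y' where "y' n = dprev d n * cnj (\<Sum>t<n. g t)" for n
  have Tc: "T_op \<alpha> d c = (\<lambda>k. \<Sum>n\<in>{k..<N}. d n * (c n - c (Suc n)))"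
    by (rule T_op_eq) (rule c)
  have "l2_inner (T_op \<alpha> d c) g = (\<Sum>k<N. (\<Sum>n\<in>{k..<N}. d n * (c n - c (Suc n))) * cnj (g k))"
    unfolding l2_inner_def Tc by (rule suminf_finite) auto
  also have "\<dots> = (\<Sum>n<N. d n * (c n - c (Suc n)) * (\<Sum>k\<le>n. cnj (g k)))"
    by (rule sum_tails_mult_swap)
  also have "\<dots> = (\<Sum>n<N. (c n - c (Suc n)) * y n)"
    by (simp add: y_def lessThan_Suc_atMost cnj_sum mult_ac)
  also have "\<dots> = (\<Sum>n<N. c n * (y n - y' n))"
    by (subst sum_diff_mult_by_parts) (simp_all add: y_def y'_def dprev_def c)
  also have "\<dots> = (\<Sum>n<N. c n * cnj (adj_seq d g n))"
    by (simp add: y_def y'_def adj_seq_def cnj_sum algebra_simps)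
  also have "\<dots> = l2_inner c (adj_seq d g)"
    unfolding l2_inner_def by (rule suminf_finite[symmetric]) (auto simp: c)
  finally show ?thesis .
qed

lemma adj_seq_unique:
  assumes "\<forall>f\<in>fin_supp. l2_inner (T_op \<alpha> d f) g = l2_inner f h"
  shows "h = adj_seq d g"
proof
  fix s :: nat
  let ?e = "\<lambda>k. if k = s then 1 else 0"
  have "cnj (h s) = l2_inner (T_op \<alpha> d ?e) g"
    using assms unit_in_fin_supp by (simp add: l2_inner_unit_left)
  also have "\<dots> = cnj (adj_seq d g s)"
    by (simp add: l2_inner_T_op[OF unit_in_fin_supp] l2_inner_unit_left)
  finally show "h s = adj_seq d g s" by simp
qed

lemma adj_dom_T_op_iff:
  assumes "g \<in> l2"
  shows "g \<in> adj_dom fin_supp (T_op \<alpha> d) \<longleftrightarrow> adj_seq d g \<in> l2"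
  using assms adj_seq_unique l2_inner_T_op unfolding adj_dom_def by blast

lemma adj_T_op:
  assumes "g \<in> adj_dom fin_supp (T_op \<alpha> d)"
  shows "adj fin_supp (T_op \<alpha> d) g = adj_seq d g"
  unfolding adj_def
proof (rule the_equality)
  show "adj_seq d g \<in> l2 \<and> (\<forall>f\<in>fin_supp. l2_inner (T_op \<alpha> d f) g = l2_inner f (adj_seq d g))"
    using assms adj_dom_T_op_iff l2_inner_T_op by (auto simp: adj_dom_def)
qed (use adj_seq_unique in blast)

lemma adj_seq_unit:
  "adj_seq d (\<lambda>k. if k = s then 1 else 0) k
     = (if k = s then cnj (d k) else 0) + (if s < k then cnj (d k - dprev d k) else 0)"
  by (simp add: adj_seq_def sum.delta)

lemma adj_seq_unit_in_l2_iff: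
  "adj_seq d (\<lambda>k. if k = s then 1 else 0) \<in> l2 \<longleftrightarrow> (\<lambda>k. d k - dprev d k) \<in> l2"
proof -
  have "\<forall>\<^sub>F k in sequentially.
      (cmod (adj_seq d (\<lambda>k. if k = s then 1 else 0) k))\<^sup>2 = (cmod (d k - dprev d k))\<^sup>2"
    using eventually_gt_at_top[of s] by eventually_elim (simp add: adj_seq_unit del: complex_cnj_diff)
  then show ?thesis unfolding l2_def mem_Collect_eq by (rule summable_cong)
qed

section \<open>The closure\<close>

definition closure_seq :: "(nat \<Rightarrow> complex) \<Rightarrow> (nat \<Rightarrow> complex) \<Rightarrow> nat \<Rightarrow> complex" where
  "closure_seq d g s = g s * d s + (\<Sum>k. (d (k + s + 1) - d (k + s)) * g (k + s + 1))"

lemma summable_diff_mult_Suc: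
  assumes "(\<lambda>k. d k - dprev d k) \<in> l2" and "g \<in> l2"
  shows "summable (\<lambda>k. (d (Suc k) - d k) * g (Suc k))"
proof -
  have "summable (\<lambda>k. (d (Suc k) - dprev d (Suc k)) * g (Suc k))"
    using l2_summable_mult[OF assms] by (subst summable_Suc_iff)
  then show ?thesis by (simp add: dprev_def)
qed

lemma l2_inner_adj_seq_unit:
  assumes e: "(\<lambda>k. d k - dprev d k) \<in> l2" and g: "g \<in> l2"
  shows "l2_inner g (adj_seq d (\<lambda>k. if k = s then 1 else 0)) = closure_seq d g s"
proof -
  define a where "a k = (if k = s then g s * d s else 0)" for k
  define b where "b k = (if s < k then (d k - dprev d k) * g k else 0)" for k
  have "g k * cnj (adj_seq d (\<lambda>k. if k = s then 1 else 0) k) = a k + b k" for k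
    by (simp add: adj_seq_unit a_def b_def del: complex_cnj_diff)
  then have "l2_inner g (adj_seq d (\<lambda>k. if k = s then 1 else 0)) = (\<Sum>k. a k + b k)"
    by (simp add: l2_inner_def)
  also have "\<dots> = suminf a + (\<Sum>n. b (n + Suc s))"
  proof -
    have sb: "summable b"
      by (rule summable_comparison_test[OF _ l2_summable_norm_mult[OF e g]])
         (auto simp: b_def norm_mult)
    have "(\<Sum>i<Suc s. b i) = 0" by (simp add: b_def)
    then show ?thesis
      using suminf_add[OF summable_finite[of "{s}"] sb] suminf_split_initial_segment[OF sb, of "Suc s"]
      by (simp add: a_def)
  qed
  also have "\<dots> = closure_seq d g s"
    by (subst suminf_finite[of "{s}"]) (auto simp: a_def b_def dprev_def closure_seq_def)
  finally show ?thesis .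
qed

lemma T_op_fin_supp: "c \<in> fin_supp \<Longrightarrow> T_op \<alpha> d c \<in> fin_supp"
proof -
  assume "c \<in> fin_supp"
  then obtain N where c: "\<And>k. k \<ge> N \<Longrightarrow> c k = 0" using fin_suppE by blast
  have "T_op \<alpha> d c = (\<lambda>k. \<Sum>n\<in>{k..<N}. d n * (c n - c (Suc n)))"
    by (rule T_op_eq) (rule c)
  then show ?thesis by (simp add: fin_suppI[of N])
qed

lemma graph_closure_T_op_imp_eq:
  assumes e: "(\<lambda>k. d k - dprev d k) \<in> l2"
    and gh: "(g, h) \<in> graph_closure fin_supp (T_op \<alpha> d)"
  shows "h = closure_seq d g"
proof
  fix s :: nat
  from gh obtain f where g: "g \<in> l2" and h: "h \<in> l2" and f: "\<And>n. f n \<in> fin_supp"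
    and f_lim: "(\<lambda>n. l2_norm (f n - g)) \<longlonglongrightarrow> 0"
    and Tf_lim: "(\<lambda>n. l2_norm (T_op \<alpha> d (f n) - h)) \<longlonglongrightarrow> 0"
    unfolding graph_closure_def by blast
  define u where "u = adj_seq d (\<lambda>k. if k = s then 1 else 0)"
  have u: "u \<in> l2" unfolding u_def using adj_seq_unit_in_l2_iff e by blast
  have f_l2: "f n \<in> l2" for n using f fin_supp_subset_l2 by blast
  have Tf_l2: "T_op \<alpha> d (f n) \<in> l2" for n using T_op_fin_supp[OF f] fin_supp_subset_l2 by blast
  have "(\<lambda>n. T_op \<alpha> d (f n) s) \<longlonglongrightarrow> h s"
  proof (rule LIM_zero_cancel, rule Lim_null_comparison[OF _ Tf_lim])
    show "\<forall>\<^sub>F n in sequentially. norm (T_op \<alpha> d (f n) s - h s) \<le> l2_norm (T_op \<alpha> d (f n) - h)"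
      using norm_le_l2_norm[OF l2_diff[OF Tf_l2 h]] by simp
  qed
  moreover have "T_op \<alpha> d (f n) s = l2_inner (f n) u" for n
    using l2_inner_T_op[OF f] l2_inner_unit_right unfolding u_def by metis
  moreover have "(\<lambda>n. l2_inner (f n) u) \<longlonglongrightarrow> l2_inner g u"
  proof (rule LIM_zero_cancel, rule Lim_null_comparison)
    show "\<forall>\<^sub>F n in sequentially. norm (l2_inner (f n) u - l2_inner g u) \<le> l2_norm (f n - g) * l2_norm u"
      using l2_inner_diff_left[OF f_l2 g u] norm_l2_inner_le[OF l2_diff[OF f_l2 g] u] by simp
    show "(\<lambda>n. l2_norm (f n - g) * l2_norm u) \<longlonglongrightarrow> 0"
      using tendsto_mult_left_zero[OF f_lim] by simp
  qed
  ultimately have "h s = l2_inner g u" using LIMSEQ_unique by auto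
  then show "h s = closure_seq d g s" unfolding u_def using l2_inner_adj_seq_unit[OF e g] by simp
qed

lemma closure_seq_diff_Suc:
  assumes "(\<lambda>k. d k - dprev d k) \<in> l2" and "g \<in> l2"
  shows "closure_seq d g s - closure_seq d g (Suc s) = d s * (g s - g (Suc s))"
proof -
  let ?a = "\<lambda>k. (d (Suc k) - d k) * g (Suc k)"
  have "summable (\<lambda>j. ?a (j + s))"
    by (rule summable_ignore_initial_segment[OF summable_diff_mult_Suc[OF assms]])
  then have "(\<Sum>j. ?a (j + Suc s)) = (\<Sum>j. ?a (j + s)) - ?a s"
    using suminf_split_head by fastforce
  then show ?thesis by (simp add: closure_seq_def algebra_simps)
qed

text \<open>Below \<open>N\<close> the forward differences of \<open>truncate_at x N\<close> are those of \<open>x\<close>, so \<open>T\<close>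
  commutes with truncation (\<open>T_op_truncate_at\<close>).\<close>

definition truncate_at :: "(nat \<Rightarrow> complex) \<Rightarrow> nat \<Rightarrow> nat \<Rightarrow> complex" where
  "truncate_at x N s = (if s < N then x s - x N else 0)"

lemma truncate_at_in_fin_supp: "truncate_at x N \<in> fin_supp"
  by (rule fin_suppI[of N]) (simp add: truncate_at_def)

lemma T_op_truncate_at:
  assumes "(\<lambda>k. d k - dprev d k) \<in> l2" and "g \<in> l2"
  shows "T_op \<alpha> d (truncate_at g N) = truncate_at (closure_seq d g) N"
proof
  fix k
  have T: "T_op \<alpha> d (truncate_at g N)
      = (\<lambda>k. \<Sum>n\<in>{k..<N}. d n * (truncate_at g N n - truncate_at g N (Suc n)))"
    by (rule T_op_eq) (simp add: truncate_at_def)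
  have "truncate_at g N n - truncate_at g N (Suc n) = g n - g (Suc n)" if "n < N" for n
    using that by (cases "Suc n = N") (auto simp: truncate_at_def)
  then have "d n * (truncate_at g N n - truncate_at g N (Suc n))
      = - (closure_seq d g (Suc n) - closure_seq d g n)" if "n < N" for n
    using that closure_seq_diff_Suc[OF assms, of n] by simp
  then have "T_op \<alpha> d (truncate_at g N) k = - (\<Sum>n\<in>{k..<N}. closure_seq d g (Suc n) - closure_seq d g n)"
    unfolding T sum_negf[symmetric] by (intro sum.cong) auto
  also have "\<dots> = truncate_at (closure_seq d g) N k"
    by (cases "k < N") (simp_all add: sum_Suc_diff' truncate_at_def)
  finally show "T_op \<alpha> d (truncate_at g N) k = truncate_at (closure_seq d g) N k" .
qed

lemma l2_norm_truncate_at_squared: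
  assumes "x \<in> l2"
  shows "(l2_norm (truncate_at x N - x))\<^sup>2 = real N * (cmod (x N))\<^sup>2 + (\<Sum>j. (cmod (x (j + N)))\<^sup>2)"
proof -
  let ?r = "\<lambda>s. (cmod ((truncate_at x N - x) s))\<^sup>2"
  have tail: "\<forall>\<^sub>F s in sequentially. ?r s = (cmod (x s))\<^sup>2"
    using eventually_ge_at_top[of N] by eventually_elim (simp add: truncate_at_def)
  have r: "summable ?r" using assms unfolding l2_def summable_cong[OF tail] by simp
  have "(\<Sum>s<N. ?r s) = real N * (cmod (x N))\<^sup>2"
    by (simp add: truncate_at_def norm_minus_commute)
  moreover have "(\<lambda>j. ?r (j + N)) = (\<lambda>j. (cmod (x (j + N)))\<^sup>2)"
    by (simp add: truncate_at_def)
  ultimately show ?thesis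
    unfolding l2_norm_def using suminf_split_initial_segment[OF r, of N] suminf_nonneg[OF r]
    by simp
qed

lemma tendsto_suminf_tail:
  fixes f :: "nat \<Rightarrow> real"
  assumes "summable f"
  shows "(\<lambda>m. \<Sum>j. f (j + m)) \<longlonglongrightarrow> 0"
  using tendsto_diff[OF tendsto_const[of "suminf f"] summable_LIMSEQ[OF assms]]
  by (simp add: suminf_minus_initial_segment[OF assms])

lemma summable_imp_weighted_subseq_tendsto_0:
  fixes a :: "nat \<Rightarrow> real"
  assumes a: "summable a" and a_nonneg: "\<And>k. 0 \<le> a k"
  obtains M where "filterlim M at_top sequentially" and "(\<lambda>n. real (M n) * a (M n)) \<longlonglongrightarrow> 0"
proof -
  have "\<exists>N\<ge>n. real N * a N < inverse (real (Suc n))" for n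
  proof (rule ccontr)
    define \<epsilon> where "\<epsilon> = inverse (real (Suc n))"
    assume "\<not> ?thesis"
    then have "\<epsilon> \<le> real N * a N" if "N \<ge> n" for N using that by (auto simp: \<epsilon>_def not_less)
    moreover have "\<epsilon> > 0" by (simp add: \<epsilon>_def)
    ultimately have "norm (\<epsilon> * inverse (real N)) \<le> a N" if "N \<ge> n" for N
      using that a_nonneg[of N]
      by (cases "N = 0") (simp_all add: divide_inverse[symmetric] pos_divide_le_eq mult.commute)
    then have "summable (\<lambda>N. \<epsilon> * inverse (real N))"
      by (intro summable_comparison_test'[OF a]) auto
    then show False using not_summable_harmonic[where 'a=real] by (simp add: \<epsilon>_def)
  qed
  then obtain M where M: "\<And>n. n \<le> M n" "\<And>n. real (M n) * a (M n) < inverse (real (Suc n))"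
    by metis
  have "filterlim M at_top sequentially"
    by (rule filterlim_at_top_mono[OF filterlim_ident]) (simp add: M)
  moreover have "(\<lambda>n. real (M n) * a (M n)) \<longlonglongrightarrow> 0"
  proof (rule real_tendsto_sandwich[OF _ _ tendsto_const LIMSEQ_inverse_real_of_nat])
    show "\<forall>\<^sub>F n in sequentially. 0 \<le> real (M n) * a (M n)" by (simp add: a_nonneg)
    show "\<forall>\<^sub>F n in sequentially. real (M n) * a (M n) \<le> inverse (real (Suc n))"
      using M(2) less_imp_le by (intro always_eventually) blast
  qed
  ultimately show ?thesis using that by blast
qed

lemma l2_norm_truncate_at_tendsto_0:
  assumes x: "x \<in> l2" and M: "filterlim M at_top sequentially"
    and weighted: "(\<lambda>n. real (M n) * (cmod (x (M n)))\<^sup>2) \<longlonglongrightarrow> 0"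
  shows "(\<lambda>n. l2_norm (truncate_at x (M n) - x)) \<longlonglongrightarrow> 0"
proof -
  have "(\<lambda>m. \<Sum>j. (cmod (x (j + m)))\<^sup>2) \<longlonglongrightarrow> 0"
    using x by (intro tendsto_suminf_tail) (simp add: l2_def)
  then have "(\<lambda>n. (l2_norm (truncate_at x (M n) - x))\<^sup>2) \<longlonglongrightarrow> 0"
    using tendsto_add[OF weighted filterlim_compose[OF _ M]]
    by (simp add: l2_norm_truncate_at_squared[OF x])
  then have "(\<lambda>n. sqrt ((l2_norm (truncate_at x (M n) - x))\<^sup>2)) \<longlonglongrightarrow> 0"
    using tendsto_real_sqrt by fastforce
  then show ?thesis by (simp add: l2_norm_def tendsto_rabs_zero_iff)
qed

lemma graph_closure_T_opI:
  assumes e: "(\<lambda>k. d k - dprev d k) \<in> l2" and g: "g \<in> l2" and Sg: "closure_seq d g \<in> l2"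
  shows "(g, closure_seq d g) \<in> graph_closure fin_supp (T_op \<alpha> d)"
proof -
  have "summable (\<lambda>k. (cmod (g k))\<^sup>2 + (cmod (closure_seq d g k))\<^sup>2)"
    using g Sg unfolding l2_def mem_Collect_eq by (rule summable_add)
  then obtain M where M: "filterlim M at_top sequentially"
    and weighted: "(\<lambda>n. real (M n) * ((cmod (g (M n)))\<^sup>2 + (cmod (closure_seq d g (M n)))\<^sup>2)) \<longlonglongrightarrow> 0"
    by (rule summable_imp_weighted_subseq_tendsto_0) simp
  have "(\<lambda>n. real (M n) * (cmod (x (M n)))\<^sup>2) \<longlonglongrightarrow> 0"
    if "\<And>k. (cmod (x k))\<^sup>2 \<le> (cmod (g k))\<^sup>2 + (cmod (closure_seq d g k))\<^sup>2" for x
  proof (rule Lim_null_comparison[OF always_eventually weighted], rule allI)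
    fix n
    show "norm (real (M n) * (cmod (x (M n)))\<^sup>2)
        \<le> real (M n) * ((cmod (g (M n)))\<^sup>2 + (cmod (closure_seq d g (M n)))\<^sup>2)"
      using mult_left_mono[OF that, of "real (M n)"] by simp
  qed
  then have "(\<lambda>n. l2_norm (truncate_at g (M n) - g)) \<longlonglongrightarrow> 0"
    and "(\<lambda>n. l2_norm (T_op \<alpha> d (truncate_at g (M n)) - closure_seq d g)) \<longlonglongrightarrow> 0"
    unfolding T_op_truncate_at[OF e g]
    by (intro l2_norm_truncate_at_tendsto_0[OF g M] l2_norm_truncate_at_tendsto_0[OF Sg M]; simp)+
  then have "\<exists>f. (\<forall>n. f n \<in> fin_supp) \<and> (\<lambda>n. l2_norm (f n - g)) \<longlonglongrightarrow> 0
      \<and> (\<lambda>n. l2_norm (T_op \<alpha> d (f n) - closure_seq d g)) \<longlonglongrightarrow> 0"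
    by (intro exI[of _ "\<lambda>n. truncate_at g (M n)"]) (simp add: truncate_at_in_fin_supp)
  then show ?thesis unfolding graph_closure_def using g Sg by simp
qed

lemma closable_T_op:
  assumes "(\<lambda>k. d k - dprev d k) \<in> l2"
  shows "closable fin_supp (T_op \<alpha> d)"
  unfolding closable_def using graph_closure_T_op_imp_eq[OF assms] by blast

lemma closure_dom_T_op_iff:
  assumes e: "(\<lambda>k. d k - dprev d k) \<in> l2" and g: "g \<in> l2"
  shows "g \<in> closure_dom fin_supp (T_op \<alpha> d) \<longleftrightarrow> closure_seq d g \<in> l2"
proof
  assume "g \<in> closure_dom fin_supp (T_op \<alpha> d)"
  then obtain h where "(g, h) \<in> graph_closure fin_supp (T_op \<alpha> d)"
    unfolding closure_dom_def by blast
  then show "closure_seq d g \<in> l2"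
    using graph_closure_T_op_imp_eq[OF e] unfolding graph_closure_def by blast
qed (use graph_closure_T_opI[OF e g] in \<open>auto simp: closure_dom_def\<close>)

lemma closure_op_T_op:
  assumes e: "(\<lambda>k. d k - dprev d k) \<in> l2" and g: "g \<in> closure_dom fin_supp (T_op \<alpha> d)"
  shows "closure_op fin_supp (T_op \<alpha> d) g = closure_seq d g"
  unfolding closure_op_def
proof (rule the_equality)
  have "g \<in> l2" using g unfolding closure_dom_def graph_closure_def by blast
  then show "(g, closure_seq d g) \<in> graph_closure fin_supp (T_op \<alpha> d)"
    using g closure_dom_T_op_iff[OF e] graph_closure_T_opI[OF e] by blast
qed (rule graph_closure_T_op_imp_eq[OF e])

theorem theorem5:
  fixes \<alpha> :: real and d g :: "nat \<Rightarrow> complex"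
  assumes "\<alpha> > -1" and "d \<in> Dtilde" and "g \<in> l2"
  shows "(g \<in> adj_dom fin_supp (T_op \<alpha> d) \<longleftrightarrow>
            summable (\<lambda>k. (cmod (g k * cnj (d k) + (cnj (d k) - cnj (dprev d k)) * (\<Sum>t<k. g t)))\<^sup>2))
       \<and> (g \<in> adj_dom fin_supp (T_op \<alpha> d) \<longrightarrow>
            adj fin_supp (T_op \<alpha> d) g
              = (\<lambda>k. g k * cnj (d k) + (cnj (d k) - cnj (dprev d k)) * (\<Sum>t<k. g t)))
       \<and> (\<forall>s::nat. (\<lambda>k. if k = s then 1 else 0) \<in> adj_dom fin_supp (T_op \<alpha> d) \<longleftrightarrow>
            (\<lambda>k. cnj (d k) - cnj (dprev d k)) \<in> l2)
       \<and> ((\<lambda>k. cnj (d k) - cnj (dprev d k)) \<in> l2 \<longrightarrow>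
            closable fin_supp (T_op \<alpha> d)
            \<and> (g \<in> closure_dom fin_supp (T_op \<alpha> d) \<longleftrightarrow>
                 summable (\<lambda>s. (cmod (g s * d s + (\<Sum>k. (d (k + s + 1) - d (k + s)) * g (k + s + 1))))\<^sup>2))
            \<and> (g \<in> closure_dom fin_supp (T_op \<alpha> d) \<longrightarrow>
                 closure_op fin_supp (T_op \<alpha> d) g
                   = (\<lambda>s. g s * d s + (\<Sum>k. (d (k + s + 1) - d (k + s)) * g (k + s + 1)))))"
proof -
  have diff_l2_iff: "(\<lambda>k. cnj (d k) - cnj (dprev d k)) \<in> l2 \<longleftrightarrow> (\<lambda>k. d k - dprev d k) \<in> l2"
    using l2_cnj_iff[of "\<lambda>k. d k - dprev d k"] by simp
  have units: "(\<lambda>k. if k = s then 1 else 0) \<in> adj_dom fin_supp (T_op \<alpha> d)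
      \<longleftrightarrow> (\<lambda>k. d k - dprev d k) \<in> l2" for s
    using adj_dom_T_op_iff[of "\<lambda>k. if k = s then 1 else 0"] adj_seq_unit_in_l2_iff
      unit_in_fin_supp fin_supp_subset_l2 by blast
  show ?thesis
    using adj_dom_T_op_iff[OF \<open>g \<in> l2\<close>] adj_T_op units closable_T_op
      closure_dom_T_op_iff[OF _ \<open>g \<in> l2\<close>] closure_op_T_op
    unfolding diff_l2_iff adj_seq_def[abs_def] closure_seq_def[abs_def] by (simp add: l2_def)
qed

end
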